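(* Let $\beta>0$ and let $T$ be an even integer with $\beta/T\le1$. Let $\mathcal{I}:=\bigcup_{\alpha\in[0,\beta/T]}\Delta^2_\alpha$. For $b\in\{0,1\}$ let $\mathcal{L}^b:=(I_2,I_2,\mathcal{I},x_1,(\gamma_t)_t,(w_t^b)_t,(c_t)_t)$ be the simplex LDS on $\Delta^2$ with $x_1=(0,1)$, $c_t(x,u):=|x(2)-1/2|$ if $t>T/2$ and $c_t(x,u):=0$ otherwise, $\gamma_t:=\frac12\mathbf{1}[t=T/2]$, $w_t^0:=(1/2,1/2)$ and $w_t^1:=(1,0)$ for all $t$. Define $\pi^0(x):=\frac\beta T(1/2,1/2)$ and $\pi^1(x):=(0,0)$. Then $\pi^0,\pi^1\in\mathcal{K}(\mathcal{I})$, and: (i) the iterates $(x_t,u_t)_{t=1}^T$ produced by following $\pi^0$ in $\mathcal{L}^0$ satisfy $\sum_{t=1}^Tc_t(x_t,u_t)\le\frac T\beta e^{-\beta/2}$; (ii) the iterates produced by following $\pi^1$ in $\mathcal{L}^1$ satisfy $\sum_{t=1}^Tc_t(x_t,u_t)=0$.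
   Context: $\Delta^2$ is the probability simplex in $\mathbb{R}^2$, $\Delta^2_\alpha:=\alpha\Delta^2$, $I_2$ is the $2\times2$ identity, $x(i)$ denotes the $i$-th coordinate. A simplex LDS $(A,B,\mathcal{I},x_1,(\gamma_t),(w_t),(c_t))$ evolves as $x_{t+1}=(1-\gamma_t)[(1-\|u_t\|_1)Ax_t+Bu_t]+\gamma_tw_t$ for controls $u_t\in\mathcal{I}$, with cost $c_t(x_t,u_t)$. $\mathbb{S}^2_\alpha:=\{\alpha M:M\text{ a }2\times2\text{ column-stochastic matrix}\}$, and $\mathcal{K}(\mathcal{I})$ is the set of linear time-invariant policies $x\mapsto Kx$ with $K\in\bigcup_{\alpha\in[0,\beta/T]}\mathbb{S}^2_\alpha$ (on $\Delta^2$, $\pi^0$ is such a policy with $K=\frac\beta T\cdot\frac12\mathbf{1}\mathbf{1}^\top$). *)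

theory Defs
  imports "HOL-Analysis.Analysis"
begin

definition simplex2 :: "(real^2) set" where
  "simplex2 = {x. (\<forall>i. 0 \<le> x$i) \<and> (\<Sum>i\<in>UNIV. x$i) = 1}"

definition scaled_simplex2 :: "real \<Rightarrow> (real^2) set" where
  "scaled_simplex2 \<alpha> = (\<lambda>x. \<alpha> *\<^sub>R x) ` simplex2"

definition norm1 :: "real^2 \<Rightarrow> real" where
  "norm1 u = (\<Sum>i\<in>UNIV. \<bar>u$i\<bar>)"

definition column_stochastic :: "real^2^2 \<Rightarrow> bool" where
  "column_stochastic M \<longleftrightarrow> (\<forall>i j. 0 \<le> M$i$j) \<and> (\<forall>j. (\<Sum>i\<in>UNIV. M$i$j) = 1)"

definition scaled_stochastic :: "real \<Rightarrow> (real^2^2) set" where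
  "scaled_stochastic \<alpha> = {\<alpha> *\<^sub>R M | M. column_stochastic M}"

definition control_set :: "real \<Rightarrow> nat \<Rightarrow> (real^2) set" where
  "control_set \<beta> T = (\<Union>\<alpha>\<in>{0..\<beta> / real T}. scaled_simplex2 \<alpha>)"

definition LTI_policies :: "real \<Rightarrow> nat \<Rightarrow> (real^2 \<Rightarrow> real^2) set" where
  "LTI_policies \<beta> T = {\<pi>. \<exists>\<alpha>\<in>{0..\<beta> / real T}. \<exists>K\<in>scaled_stochastic \<alpha>.
       \<forall>x\<in>simplex2. \<pi> x = K *v x}"

text \<open>State trajectory of the simplex LDS (A,B,I,x1,gamma,w,c) under policy pi:
  lds_state A B x1 \<gamma> w \<pi> t = x_t for t \<ge> 1 (time is 1-indexed; index 0 is unused and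
  set to x1); u_t = \<pi> x_t.\<close>
fun lds_state :: "real^2^2 \<Rightarrow> real^2^2 \<Rightarrow> real^2 \<Rightarrow> (nat \<Rightarrow> real) \<Rightarrow> (nat \<Rightarrow> real^2)
      \<Rightarrow> (real^2 \<Rightarrow> real^2) \<Rightarrow> nat \<Rightarrow> real^2" where
  "lds_state A B x1 \<gamma> w \<pi> 0 = x1"
| "lds_state A B x1 \<gamma> w \<pi> (Suc 0) = x1"
| "lds_state A B x1 \<gamma> w \<pi> (Suc (Suc t)) =
     (let x = lds_state A B x1 \<gamma> w \<pi> (Suc t); u = \<pi> x in
       (1 - \<gamma> (Suc t)) *\<^sub>R ((1 - norm1 u) *\<^sub>R (A *v x) + B *v u) + \<gamma> (Suc t) *\<^sub>R w (Suc t))"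

definition lds_cost :: "real^2^2 \<Rightarrow> real^2^2 \<Rightarrow> real^2 \<Rightarrow> (nat \<Rightarrow> real) \<Rightarrow> (nat \<Rightarrow> real^2)
      \<Rightarrow> (nat \<Rightarrow> real^2 \<Rightarrow> real^2 \<Rightarrow> real) \<Rightarrow> (real^2 \<Rightarrow> real^2) \<Rightarrow> nat \<Rightarrow> real" where
  "lds_cost A B x1 \<gamma> w c \<pi> T =
     (\<Sum>t=1..T. let x = lds_state A B x1 \<gamma> w \<pi> t in c t x (\<pi> x))"

definition vec2 :: "real \<Rightarrow> real \<Rightarrow> real^2" where
  "vec2 a b = (\<chi> i. if i = 1 then a else b)"

definition ex_x1 :: "real^2" where "ex_x1 = vec2 0 1"

definition ex_cost :: "nat \<Rightarrow> nat \<Rightarrow> real^2 \<Rightarrow> real^2 \<Rightarrow> real" where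
  "ex_cost T t x u = (if real t > real T / 2 then \<bar>x$2 - 1/2\<bar> else 0)"

definition ex_gamma :: "nat \<Rightarrow> nat \<Rightarrow> real" where
  "ex_gamma T t = (if real t = real T / 2 then 1/2 else 0)"

definition ex_w0 :: "nat \<Rightarrow> real^2" where "ex_w0 t = vec2 (1/2) (1/2)"
definition ex_w1 :: "nat \<Rightarrow> real^2" where "ex_w1 t = vec2 1 0"

definition ex_pi0 :: "real \<Rightarrow> nat \<Rightarrow> real^2 \<Rightarrow> real^2" where
  "ex_pi0 \<beta> T x = (\<beta> / real T) *\<^sub>R vec2 (1/2) (1/2)"
definition ex_pi1 :: "real^2 \<Rightarrow> real^2" where
  "ex_pi1 x = vec2 0 0"

end

theory Submission
  imports Defs
begin

text \<open>With identity dynamics, the constant control \<open>a p\<close> for a point \<open>p\<close> of the simplex and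
  the disturbance \<open>p\<close>, every step shrinks the deviation \<open>x\<^sub>t - p\<close> by the factor
  \<open>(1 - \<gamma>\<^sub>t)(1 - a)\<close>. For \<open>\<pi>\<^sup>0\<close> in \<open>\<L>\<^sup>0\<close>, with \<open>a = \<beta>/T\<close> and \<open>p = (1/2,1/2)\<close>, the cost at
  time \<open>t > T/2\<close> is therefore \<open>(1 - a)\<^bsup>t-1\<^esup>/4\<close>, and the tail of this geometric series is
  at most \<open>(1 - a)\<^bsup>T/2\<^esup>/a \<le> e\<^bsup>-\<beta>/2\<^esup> T/\<beta>\<close>. Under the null policy \<open>\<pi>\<^sup>1\<close> in \<open>\<L>\<^sup>1\<close> the state
  stays at \<open>(0,1)\<close> until the single disturbance at time \<open>T/2\<close> moves it to the fixed point
  \<open>(1/2,1/2)\<close>, whose cost is zero. Both policies are constant on the simplex, hence of the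
  form \<open>x \<mapsto> K x\<close> with \<open>K = \<alpha> p 1\<^sup>T\<close>.\<close>

lemma vec2_in_simplex2: "0 \<le> a \<Longrightarrow> 0 \<le> b \<Longrightarrow> a + b = 1 \<Longrightarrow> vec2 a b \<in> simplex2"
  by (auto simp: simplex2_def vec2_def sum_2 forall_2)

lemma norm1_scaleR_simplex2:
  assumes "p \<in> simplex2" and "0 \<le> \<alpha>"
  shows "norm1 (\<alpha> *\<^sub>R p) = \<alpha>"
  using assms by (simp add: norm1_def simplex2_def sum_distrib_left[symmetric])

lemma constant_policy_in_LTI_policies:
  assumes p: "p \<in> simplex2" and \<alpha>: "\<alpha> \<in> {0..\<beta> / real T}"
  shows "(\<lambda>x. \<alpha> *\<^sub>R p) \<in> LTI_policies \<beta> T"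
  unfolding LTI_policies_def mem_Collect_eq
proof (intro bexI[OF _ \<alpha>] bexI[of _ "\<alpha> *\<^sub>R (\<chi> i j. p$i)"] ballI)
  fix x :: "real^2"
  assume "x \<in> simplex2"
  then have "x$1 + x$2 = 1"
    by (simp add: simplex2_def sum_2)
  then show "\<alpha> *\<^sub>R p = (\<alpha> *\<^sub>R (\<chi> i j. p$i)) *v x"
    by (simp add: vec_eq_iff matrix_vector_mult_def sum_2 flip: distrib_left)
next
  show "\<alpha> *\<^sub>R (\<chi> i j. p$i) \<in> scaled_stochastic \<alpha>"
    using p by (auto simp: scaled_stochastic_def column_stochastic_def simplex2_def)
qed

lemma lds_state_constant_policy_deviation:
  assumes p: "p \<in> simplex2" and a: "0 \<le> a"
  shows "lds_state (mat 1) (mat 1) x1 \<gamma> (\<lambda>_. p) (\<lambda>_. a *\<^sub>R p) (Suc n) - p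
    = (\<Prod>k=1..n. (1 - \<gamma> k) * (1 - a)) *\<^sub>R (x1 - p)"
proof (induction n)
  case 0
  show ?case
    unfolding lds_state.simps(2) by simp
next
  case (Suc n)
  let ?x = "lds_state (mat 1) (mat 1) x1 \<gamma> (\<lambda>_. p) (\<lambda>_. a *\<^sub>R p) (Suc n)"
  have "lds_state (mat 1) (mat 1) x1 \<gamma> (\<lambda>_. p) (\<lambda>_. a *\<^sub>R p) (Suc (Suc n))
      = (1 - \<gamma> (Suc n)) *\<^sub>R ((1 - a) *\<^sub>R ?x + a *\<^sub>R p) + \<gamma> (Suc n) *\<^sub>R p"
    using norm1_scaleR_simplex2[OF p a] by (simp add: Let_def)
  also have "\<dots> = p + ((1 - \<gamma> (Suc n)) * (1 - a)) *\<^sub>R (?x - p)"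
    by (simp add: vec_eq_iff algebra_simps)
  finally show ?case
    using Suc.IH by simp
qed

lemma lds_state_null_policy:
  assumes "\<And>k. k \<noteq> h \<Longrightarrow> \<gamma> k = 0" and "0 < h"
  shows "lds_state (mat 1) (mat 1) x1 \<gamma> w (\<lambda>_. 0) (Suc n)
    = (if n < h then x1 else (1 - \<gamma> h) *\<^sub>R x1 + \<gamma> h *\<^sub>R w h)"
proof (induction n)
  case 0
  show ?case
    using \<open>0 < h\<close> unfolding lds_state.simps(2) by simp
next
  case (Suc n)
  then show ?case
    using assms by (cases "Suc n = h") (auto simp: norm1_def)
qed

lemma sum_geometric_tail:
  fixes c q :: real
  shows "(\<Sum>t=1..h + m. if h < t then c * q ^ (t - 1) else 0) = c * q ^ h * (\<Sum>j<m. q ^ j)"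
proof (induction m)
  case 0
  show ?case
    by (auto intro: sum.neutral)
next
  case (Suc m)
  have "(\<Sum>t=1..h + Suc m. if h < t then c * q ^ (t - 1) else 0)
      = (\<Sum>t=1..h + m. if h < t then c * q ^ (t - 1) else 0) + c * q ^ (h + m)"
    by simp
  then show ?case
    using Suc.IH by (simp add: algebra_simps power_add)
qed

lemma sum_geometric_tail_le_exp:
  fixes a :: real
  assumes "0 < a" and "a \<le> 1"
  shows "(\<Sum>t=1..h + h. if h < t then 1/4 * (1 - a) ^ (t - 1) else 0) \<le> exp (- (a * h)) / a"
proof -
  have q0: "0 \<le> (1 - a) ^ h" and q1: "(1 - a) ^ h \<le> 1"
    using assms by (auto intro: power_le_one)
  have "(\<Sum>t=1..h + h. if h < t then 1/4 * (1 - a) ^ (t - 1) else 0)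
      = 1/4 * (1 - a) ^ h * (\<Sum>j<h. (1 - a) ^ j)"
    by (rule sum_geometric_tail)
  also have "(\<Sum>j<h. (1 - a) ^ j) = (1 - (1 - a) ^ h) / a"
    using \<open>0 < a\<close> by (simp add: sum_gp_strict)
  also have "1/4 * (1 - a) ^ h * ((1 - (1 - a) ^ h) / a) \<le> (1 - a) ^ h / a"
    using q0 q1 \<open>0 < a\<close> by (simp add: field_simps mult_le_one)
  also have "\<dots> \<le> exp (- a) ^ h / a"
    using assms exp_ge_add_one_self[of "- a"] by (intro divide_right_mono power_mono) auto
  also have "\<dots> = exp (- (a * h)) / a"
    by (simp add: exp_of_nat_mult[symmetric] mult.commute)
  finally show ?thesis .
qed

lemma ex_gamma_double: "ex_gamma (h + h) t = (if t = h then 1/2 else 0)"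
  unfolding ex_gamma_def by auto

lemma prod_ex_gamma_contraction:
  assumes "0 < h"
  shows "(\<Prod>k=1..n. (1 - ex_gamma (h + h) k) * (1 - a)) = (if h \<le> n then 1/2 else 1) * (1 - a) ^ n"
proof -
  have "(\<Prod>k=1..n. 1 - ex_gamma (h + h) k) = (\<Prod>k=1..n. if k = h then 1/2 else 1)"
    by (intro prod.cong) (auto simp: ex_gamma_double)
  also have "\<dots> = (if h \<le> n then 1/2 else 1)"
    using assms by simp
  finally show ?thesis
    by (simp add: prod.distrib)
qed

lemma lds_cost_ex_w0_mixing_policy:
  assumes "0 < h" and "0 \<le> a" and "a \<le> 1"
  shows "lds_cost (mat 1) (mat 1) ex_x1 (ex_gamma (h + h)) ex_w0 (ex_cost (h + h))
      (\<lambda>_. a *\<^sub>R vec2 (1/2) (1/2)) (h + h)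
    = (\<Sum>t=1..h + h. if h < t then 1/4 * (1 - a) ^ (t - 1) else 0)"
  unfolding lds_cost_def
proof (intro sum.cong refl)
  fix t
  assume "t \<in> {1..h + h}"
  then obtain n where t: "t = Suc n"
    by (cases t) auto
  have w0: "ex_w0 = (\<lambda>_. vec2 (1/2) (1/2))"
    by (simp add: ex_w0_def fun_eq_iff)
  define x where "x = lds_state (mat 1) (mat 1) ex_x1 (ex_gamma (h + h)) ex_w0
    (\<lambda>_. a *\<^sub>R vec2 (1/2) (1/2)) t"
  let ?c = "(if h \<le> n then 1/2 else 1) * (1 - a) ^ n"
  have "x - vec2 (1/2) (1/2) = ?c *\<^sub>R (ex_x1 - vec2 (1/2) (1/2))"
    using lds_state_constant_policy_deviation[OF vec2_in_simplex2 \<open>0 \<le> a\<close>,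
        of "1/2" "1/2" ex_x1 "ex_gamma (h + h)" n]
    unfolding x_def w0 t prod_ex_gamma_contraction[OF \<open>0 < h\<close>] by simp
  then have "x $ 2 = 1/2 + ?c / 2"
    by (simp add: vec_eq_iff forall_2 ex_x1_def vec2_def)
  moreover have "real (h + h) / 2 = real h"
    by simp
  moreover have "0 \<le> (1 - a) ^ n"
    using \<open>a \<le> 1\<close> by simp
  ultimately have "ex_cost (h + h) t x u = (if h < t then 1/4 * (1 - a) ^ (t - 1) else 0)" for u
    by (simp add: ex_cost_def t)
  then show "(let x = lds_state (mat 1) (mat 1) ex_x1 (ex_gamma (h + h)) ex_w0 (\<lambda>_. a *\<^sub>R vec2 (1/2) (1/2)) t
        in ex_cost (h + h) t x (a *\<^sub>R vec2 (1/2) (1/2)))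
      = (if h < t then 1/4 * (1 - a) ^ (t - 1) else 0)"
    unfolding x_def Let_def .
qed

lemma lds_cost_ex_w1_ex_pi1:
  assumes "0 < h"
  shows "lds_cost (mat 1) (mat 1) ex_x1 (ex_gamma (h + h)) ex_w1 (ex_cost (h + h)) ex_pi1 (h + h) = 0"
  unfolding lds_cost_def
proof (intro sum.neutral ballI)
  fix t
  assume "t \<in> {1..h + h}"
  then obtain n where t: "t = Suc n"
    by (cases t) auto
  have "ex_pi1 = (\<lambda>_. 0)"
    by (simp add: fun_eq_iff ex_pi1_def vec2_def vec_eq_iff)
  then have "lds_state (mat 1) (mat 1) ex_x1 (ex_gamma (h + h)) ex_w1 ex_pi1 t
      = (if n < h then ex_x1 else vec2 (1/2) (1/2))"
    using lds_state_null_policy[of h "ex_gamma (h + h)", OF _ \<open>0 < h\<close>]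
    by (simp add: t ex_gamma_double ex_x1_def ex_w1_def vec2_def vec_eq_iff)
  then show "(let x = lds_state (mat 1) (mat 1) ex_x1 (ex_gamma (h + h)) ex_w1 ex_pi1 t
      in ex_cost (h + h) t x (ex_pi1 x)) = 0"
    by (simp add: Let_def ex_cost_def t vec2_def)
qed

lemma ex_policies_in_LTI_policies:
  assumes "0 < \<beta>"
  shows "ex_pi0 \<beta> T \<in> LTI_policies \<beta> T" and "ex_pi1 \<in> LTI_policies \<beta> T"
proof -
  have p: "vec2 (1/2) (1/2) \<in> simplex2"
    by (rule vec2_in_simplex2) auto
  have "ex_pi0 \<beta> T = (\<lambda>_. (\<beta> / real T) *\<^sub>R vec2 (1/2) (1/2))"
    by (simp add: fun_eq_iff ex_pi0_def)
  then show "ex_pi0 \<beta> T \<in> LTI_policies \<beta> T"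
    using assms by (simp add: constant_policy_in_LTI_policies[OF p])
  have "ex_pi1 = (\<lambda>_. 0 *\<^sub>R vec2 (1/2) (1/2))"
    by (simp add: fun_eq_iff ex_pi1_def vec2_def vec_eq_iff)
  then show "ex_pi1 \<in> LTI_policies \<beta> T"
    using assms constant_policy_in_LTI_policies[OF p, of 0 \<beta> T] by simp
qed

theorem lemma12:
  fixes \<beta> :: real and T :: nat
  assumes "\<beta> > 0" and "even T" and "T > 0" and "\<beta> / real T \<le> 1"
  shows "ex_pi0 \<beta> T \<in> LTI_policies \<beta> T \<and> ex_pi1 \<in> LTI_policies \<beta> T
    \<and> lds_cost (mat 1) (mat 1) ex_x1 (ex_gamma T) ex_w0 (ex_cost T) (ex_pi0 \<beta> T) T
        \<le> real T / \<beta> * exp (- \<beta> / 2)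
    \<and> lds_cost (mat 1) (mat 1) ex_x1 (ex_gamma T) ex_w1 (ex_cost T) ex_pi1 T = 0"
proof -
  obtain h where T: "T = h + h"
    using \<open>even T\<close> by (metis evenE mult_2)
  have "0 < h"
    using \<open>T > 0\<close> T by simp
  define a where "a = \<beta> / real T"
  have "0 < a" and "a \<le> 1"
    using assms by (simp_all add: a_def)
  have "a * h = \<beta> / 2"
    using \<open>0 < h\<close> unfolding a_def T by (simp add: field_simps)
  have "ex_pi0 \<beta> T = (\<lambda>_. a *\<^sub>R vec2 (1/2) (1/2))"
    by (simp add: fun_eq_iff ex_pi0_def a_def)
  then have "lds_cost (mat 1) (mat 1) ex_x1 (ex_gamma T) ex_w0 (ex_cost T) (ex_pi0 \<beta> T) T
      = (\<Sum>t=1..h + h. if h < t then 1/4 * (1 - a) ^ (t - 1) else 0)"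
    using lds_cost_ex_w0_mixing_policy[OF \<open>0 < h\<close> less_imp_le[OF \<open>0 < a\<close>] \<open>a \<le> 1\<close>]
    by (simp add: T)
  also have "\<dots> \<le> exp (- (a * h)) / a"
    using \<open>0 < a\<close> \<open>a \<le> 1\<close> by (rule sum_geometric_tail_le_exp)
  also have "\<dots> = real T / \<beta> * exp (- \<beta> / 2)"
    unfolding \<open>a * h = \<beta> / 2\<close> by (simp add: a_def)
  finally show ?thesis
    using ex_policies_in_LTI_policies[OF \<open>\<beta> > 0\<close>] lds_cost_ex_w1_ex_pi1[OF \<open>0 < h\<close>]
    by (simp add: T)
qed

end
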